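(* Let $\lambda=0.098$, $f_1=5-\log5$, and define $V(f)=\frac{\pi}{2^{1/2}}+\lambda(f-1)^{3/2}$ and $W(f)=V(f)^2-\log(4V(f)^2)-f$ for $f\ge1$. Then $0<\lambda<\dfrac{2J(f_1)}{3(f_1-1)}$, $W(f_1)>0$, and $W'(f_1)<0$.
   Context: For $f>1$ let $h^*(f)>1$ and $h_*(f)\in(0,1)$ be the two solutions $h$ of $h-\log h=f$, and set $J(f)=\frac1{h^*(f)-1}+\frac1{1-h_*(f)}-\big(\frac2{f-1}\big)^{1/2}$. *)

theory Defs
  imports "HOL-Analysis.Analysis"
begin

definition h_upper :: "real \<Rightarrow> real" where
  "h_upper f = (THE h. h > 1 \<and> h - ln h = f)"

definition h_lower :: "real \<Rightarrow> real" where
  "h_lower f = (THE h. 0 < h \<and> h < 1 \<and> h - ln h = f)"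

definition J :: "real \<Rightarrow> real" where
  "J f = 1 / (h_upper f - 1) + 1 / (1 - h_lower f) - sqrt (2 / (f - 1))"

definition lam :: real where "lam = 0.098"

definition f1 :: real where "f1 = 5 - ln 5"

definition V :: "real \<Rightarrow> real" where
  "V f = pi / sqrt 2 + lam * (f - 1) powr (3/2)"

definition W :: "real \<Rightarrow> real" where
  "W f = (V f)\<^sup>2 - ln (4 * (V f)\<^sup>2) - f"

end

theory Submission
  imports Defs
begin

text \<open>The larger root is exact: h_upper f1 = 5, because f1 = 5 - ln 5. The smaller root is only
  bounded below, by 1/40, using that x - ln x decreases on (0, 1] and exceeds f1 at 1/40.
  Everything else is interval arithmetic around f1, with ln 5 enclosed through Taylor bounds
  on exp; the margins for W f1 and W' f1 are below 10^-3, which dictates the precision.\<close>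

lemma exp_ge_Taylor_sum:
  fixes x :: real
  assumes "0 \<le> x"
  shows "(\<Sum>m<n. x ^ m / fact m) \<le> exp x"
proof -
  obtain t where "exp x = (\<Sum>m<n. x ^ m / fact m) + exp t / fact n * x ^ n"
    using Maclaurin_exp_le by blast
  moreover have "0 \<le> exp t / fact n * x ^ n"
    using assms by simp
  ultimately show ?thesis
    by linarith
qed

lemma exp_le_Taylor_sum_div:
  fixes x :: real
  assumes "0 \<le> x" and "x ^ n < fact n"
  shows "exp x \<le> (\<Sum>m<n. x ^ m / fact m) / (1 - x ^ n / fact n)"
proof -
  obtain t where t: "\<bar>t\<bar> \<le> \<bar>x\<bar>"
    and exp_x: "exp x = (\<Sum>m<n. x ^ m / fact m) + exp t / fact n * x ^ n"
    using Maclaurin_exp_le by blast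
  have "exp t / fact n * x ^ n \<le> exp x / fact n * x ^ n"
    using t assms(1) by (intro mult_right_mono divide_right_mono) auto
  then have "exp x - exp x * (x ^ n / fact n) \<le> (\<Sum>m<n. x ^ m / fact m)"
    using exp_x by simp
  then have "exp x * (1 - x ^ n / fact n) \<le> (\<Sum>m<n. x ^ m / fact m)"
    by (simp add: algebra_simps)
  moreover have "0 < 1 - x ^ n / fact n"
    using assms by simp
  ultimately show ?thesis
    by (simp add: field_simps)
qed

lemma diff_ln_strict_mono:
  fixes a b :: real
  assumes "1 \<le> a" and "a < b"
  shows "a - ln a < b - ln b"
proof -
  have "ln b - ln a < (b - a) / a"
    using assms by (intro ln_diff_less) auto
  also have "\<dots> \<le> b - a"
    using assms by (simp add: divide_le_eq)
  finally show ?thesis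
    by simp
qed

lemma diff_ln_strict_antimono:
  fixes a b :: real
  assumes "0 < a" and "a < b" and "b \<le> 1"
  shows "b - ln b < a - ln a"
proof -
  have "ln a - ln b < (a - b) / b"
    using assms by (intro ln_diff_less) auto
  also have "\<dots> \<le> a - b"
    using assms by (simp add: divide_le_eq mult_le_cancel_left_neg)
  finally show ?thesis
    by simp
qed

lemma h_upper_eqI:
  assumes "1 < h" and "h - ln h = f"
  shows "h_upper f = h"
  unfolding h_upper_def
proof (rule the_equality)
  fix g assume g: "g > 1 \<and> g - ln g = f"
  show "g = h"
    using diff_ln_strict_mono[of g h] diff_ln_strict_mono[of h g] g assms
    by (cases g h rule: linorder_cases) auto
qed (use assms in auto)

lemma h_lower_eqI:
  assumes "0 < h" and "h < 1" and "h - ln h = f"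
  shows "h_lower f = h"
  unfolding h_lower_def
proof (rule the_equality)
  fix g assume g: "0 < g \<and> g < 1 \<and> g - ln g = f"
  show "g = h"
    using diff_ln_strict_antimono[of g h] diff_ln_strict_antimono[of h g] g assms
    by (cases g h rule: linorder_cases) auto
qed (use assms in auto)

lemma h_lower_bounds:
  assumes "1 < f" and "0 < a" and "a \<le> 1" and "f \<le> a - ln a"
  shows "a \<le> h_lower f" and "h_lower f < 1"
proof -
  have "continuous_on {a..1} (\<lambda>x. x - ln x)"
    using assms(2) by (intro continuous_intros) auto
  then obtain h where h: "a \<le> h" "h \<le> 1" "h - ln h = f"
    using IVT2'[of "\<lambda>x. x - ln x" 1 f a] assms by auto
  moreover have "h \<noteq> 1"
    using h assms(1) by auto
  ultimately have "h_lower f = h"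
    using assms(2) by (intro h_lower_eqI) auto
  with h \<open>h \<noteq> 1\<close> show "a \<le> h_lower f" and "h_lower f < 1"
    by simp_all
qed

lemma powr_three_halves:
  fixes x :: real
  assumes "0 \<le> x"
  shows "x powr (3/2) = x * sqrt x"
proof (cases "x = 0")
  case False
  then show ?thesis
    using assms powr_add[of x 1 "1/2"] by (simp add: powr_half_sqrt)
qed simp

lemma V_pos: "0 < V f"
  unfolding V_def lam_def by (simp add: add_pos_nonneg)

lemma V_has_real_derivative:
  assumes "1 < f"
  shows "(V has_real_derivative 3/2 * lam * sqrt (f - 1)) (at f)"
proof (rule DERIV_cong)
  show "(V has_real_derivative lam * (3/2 * (f - 1) powr (3/2 - 1))) (at f)"
    unfolding V_def[abs_def] using assms by (auto intro!: derivative_eq_intros)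
  show "lam * (3/2 * (f - 1) powr (3/2 - 1)) = 3/2 * lam * sqrt (f - 1)"
    using assms by (simp add: powr_half_sqrt)
qed

lemma W_has_real_derivative:
  assumes "1 < f"
  shows "(W has_real_derivative (2 * V f - 2 / V f) * (3/2 * lam * sqrt (f - 1)) - 1) (at f)"
proof (rule DERIV_cong)
  let ?V' = "3/2 * lam * sqrt (f - 1)"
  show "(W has_real_derivative 2 * V f * ?V' - 4 * (2 * V f * ?V') / (4 * (V f)\<^sup>2) - 1) (at f)"
    unfolding W_def[abs_def] using V_pos[of f]
    by (auto intro!: derivative_eq_intros V_has_real_derivative assms)
  show "2 * V f * ?V' - 4 * (2 * V f * ?V') / (4 * (V f)\<^sup>2) - 1 = (2 * V f - 2 / V f) * ?V' - 1"
    using V_pos[of f] by (simp add: field_simps power2_eq_square)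
qed

lemma W_ge_of_le_V:
  assumes "1 \<le> v" and "v \<le> V f"
  shows "v\<^sup>2 - ln (4 * v\<^sup>2) - f \<le> W f"
proof -
  have "v\<^sup>2 \<le> (V f)\<^sup>2"
    using assms by (intro power_mono) auto
  moreover have "1 \<le> v\<^sup>2"
    using assms by simp
  ultimately have "v\<^sup>2 - ln (v\<^sup>2) \<le> (V f)\<^sup>2 - ln ((V f)\<^sup>2)"
    using diff_ln_strict_mono[of "v\<^sup>2" "(V f)\<^sup>2"] by fastforce
  moreover have "0 < v" and "0 < V f"
    using assms by auto
  ultimately show ?thesis
    unfolding W_def by (simp add: ln_mult)
qed

lemma ln_5_bounds: "1.6094 \<le> ln (5::real)" "ln (5::real) \<le> 1.609438"
proof -
  have "exp (1.6094::real) \<le> (\<Sum>m<12. 1.6094 ^ m / fact m) / (1 - 1.6094 ^ 12 / fact 12)"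
    by (rule exp_le_Taylor_sum_div) (simp_all add: eval_nat_numeral fact_Suc)
  also have "\<dots> \<le> 5"
    by (simp add: eval_nat_numeral fact_Suc)
  finally show "1.6094 \<le> ln (5::real)"
    using ln_ge_iff[of 5 "1.6094"] by simp
  have "(5::real) \<le> (\<Sum>m<13. 1.609438 ^ m / fact m)"
    by (simp add: eval_nat_numeral fact_Suc)
  also have "\<dots> \<le> exp 1.609438"
    by (rule exp_ge_Taylor_sum) simp
  finally show "ln (5::real) \<le> 1.609438"
    using ln_le_cancel_iff[of 5 "exp 1.609438"] by simp
qed

lemma sqrt_2_bounds: "1.4142135 \<le> sqrt (2::real)" "sqrt (2::real) \<le> 1.41421357"
  by (rule real_le_rsqrt; simp add: power2_eq_square)
     (rule real_le_lsqrt; simp add: power2_eq_square)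

lemma f1_minus_one_bounds: "2.390562 \<le> f1 - 1" "f1 - 1 \<le> 2.3906"
  using ln_5_bounds unfolding f1_def by simp_all

lemma sqrt_f1_minus_one_bounds: "1.546144 \<le> sqrt (f1 - 1)" "sqrt (f1 - 1) \<le> 1.54616"
proof -
  show "1.546144 \<le> sqrt (f1 - 1)"
    using f1_minus_one_bounds by (intro real_le_rsqrt) (simp add: power2_eq_square)
  show "sqrt (f1 - 1) \<le> 1.54616"
    using f1_minus_one_bounds by (intro real_le_lsqrt) (simp_all add: power2_eq_square)
qed

lemma V_f1_bounds: "2.583664 \<le> V f1" "V f1 \<le> 2.58368"
proof -
  have V_f1: "V f1 = pi / sqrt 2 + 0.098 * ((f1 - 1) * sqrt (f1 - 1))"
    unfolding V_def lam_def using f1_minus_one_bounds by (simp add: powr_three_halves)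
  have "3.141592653588 / 1.41421357 \<le> pi / sqrt (2::real)"
    using pi_approx sqrt_2_bounds by (intro frac_le) auto
  moreover have "2.390562 * 1.546144 \<le> (f1 - 1) * sqrt (f1 - 1)"
    using f1_minus_one_bounds sqrt_f1_minus_one_bounds by (intro mult_mono) auto
  ultimately show "2.583664 \<le> V f1"
    unfolding V_f1 by simp
  have "pi / sqrt (2::real) \<le> 3.1415926535899 / 1.4142135"
    using pi_approx sqrt_2_bounds by (intro frac_le) auto
  moreover have "(f1 - 1) * sqrt (f1 - 1) \<le> 2.3906 * 1.54616"
    using f1_minus_one_bounds sqrt_f1_minus_one_bounds by (intro mult_mono) auto
  ultimately show "V f1 \<le> 2.58368"
    unfolding V_f1 by simp
qed

lemma h_upper_f1: "h_upper f1 = 5"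
  by (rule h_upper_eqI) (simp_all add: f1_def)

lemma h_lower_f1_bounds: "1/40 \<le> h_lower f1" "h_lower f1 < 1"
proof -
  have "ln (40::real) = 3 * ln 2 + ln 5"
    using ln_realpow[of 2 3] ln_mult[of "2^3" 5] by simp
  then have "1/40 - ln (1/40::real) = 1/40 + 3 * ln 2 + ln 5"
    by (simp add: ln_div)
  then have "f1 \<le> 1/40 - ln (1/40)"
    using ln2_ge_two_thirds ln_5_bounds unfolding f1_def by simp
  moreover have "1 < f1"
    using f1_minus_one_bounds by simp
  ultimately show "1/40 \<le> h_lower f1" "h_lower f1 < 1"
    using h_lower_bounds[of f1 "1/40"] by simp_all
qed

lemma lam_less_J_f1: "lam < 2 * J f1 / (3 * (f1 - 1))"
proof -
  have "sqrt (2 / (f1 - 1)) \<le> 0.9147"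
    using f1_minus_one_bounds by (intro real_le_lsqrt) (simp_all add: divide_le_eq power2_eq_square)
  moreover have "1 / (1 - 1/40) \<le> 1 / (1 - h_lower f1)"
    using h_lower_f1_bounds by (intro divide_left_mono) auto
  ultimately have "1/4 + 40/39 - 0.9147 \<le> J f1"
    unfolding J_def h_upper_f1 by simp
  then have "lam * (3 * (f1 - 1)) < 2 * J f1"
    using f1_minus_one_bounds unfolding lam_def by simp
  then show ?thesis
    using f1_minus_one_bounds by (simp add: pos_less_divide_eq)
qed

lemma W_f1_pos: "0 < W f1"
proof -
  define l :: real where "l = 2.583664"
  have "4 * l\<^sup>2 / 5 \<le> (\<Sum>m<12. 1.6753 ^ m / fact m)"
    unfolding l_def by (simp add: eval_nat_numeral fact_Suc)
  also have "\<dots> \<le> exp 1.6753"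
    by (rule exp_ge_Taylor_sum) simp
  finally have "ln (4 * l\<^sup>2 / 5) \<le> 1.6753"
    using ln_le_cancel_iff[of "4 * l\<^sup>2 / 5" "exp 1.6753"] unfolding l_def by simp
  then have "ln (4 * l\<^sup>2) \<le> 1.6753 + ln 5"
    unfolding l_def by (simp add: ln_div)
  moreover have "l\<^sup>2 - ln (4 * l\<^sup>2) - f1 \<le> W f1"
    using V_f1_bounds unfolding l_def by (intro W_ge_of_le_V) auto
  ultimately show ?thesis
    unfolding f1_def l_def by (simp add: power2_eq_square)
qed

lemma W_derivative_f1_neg: "(2 * V f1 - 2 / V f1) * (3/2 * lam * sqrt (f1 - 1)) - 1 < 0"
proof -
  have "2 / 2.58368 \<le> 2 / V f1"
    using V_f1_bounds by (intro divide_left_mono) auto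
  then have upper: "2 * V f1 - 2 / V f1 \<le> 2 * 2.58368 - 2 / 2.58368"
    using V_f1_bounds by linarith
  have "1 \<le> V f1"
    using V_f1_bounds by simp
  then have "2 / V f1 \<le> 2"
    by (simp add: divide_le_eq)
  then have nonneg: "0 \<le> 2 * V f1 - 2 / V f1"
    using \<open>1 \<le> V f1\<close> by linarith
  have "3/2 * lam * sqrt (f1 - 1) \<le> 0.147 * 1.54616"
    using sqrt_f1_minus_one_bounds unfolding lam_def by simp
  with upper nonneg have "(2 * V f1 - 2 / V f1) * (3/2 * lam * sqrt (f1 - 1))
      \<le> (2 * 2.58368 - 2 / 2.58368) * (0.147 * 1.54616)"
    using f1_minus_one_bounds unfolding lam_def by (intro mult_mono) auto
  moreover have "(2 * 2.58368 - 2 / 2.58368) * (0.147 * 1.54616) < (1::real)"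
    by simp
  ultimately show ?thesis
    by linarith
qed

theorem lemma2p8:
  shows "0 < lam \<and> lam < 2 * J f1 / (3 * (f1 - 1)) \<and> W f1 > 0 \<and>
         (\<exists>D. (W has_real_derivative D) (at f1) \<and> D < 0)"
proof (intro conjI)
  show "0 < lam"
    unfolding lam_def by simp
  show "lam < 2 * J f1 / (3 * (f1 - 1))"
    by (rule lam_less_J_f1)
  show "W f1 > 0"
    by (rule W_f1_pos)
  have "1 < f1"
    using f1_minus_one_bounds by simp
  then show "\<exists>D. (W has_real_derivative D) (at f1) \<and> D < 0"
    using W_has_real_derivative W_derivative_f1_neg by blast
qed

end
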